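(* Assume $\ker(K)\cap\ker(D)=\{0\}$ and let $\Psi$ be a reconstructor. Let $\{\delta_k\}_{k\in\mathbb{N}}$ be a sequence of noise levels with $\delta_k\to0$ as $k\to\infty$, and for each $k$ let $y^{\delta_k}=Kx^{GT}+e_k$ with $\|e_k\|_2\le\delta_k$. For each $k$ let $x^*_{\Psi,\delta_k}$ be the unique minimizer over $\mathcal{X}$ of $\mathcal{J}_{\Psi,\delta_k}(x)=\|Kx-y^{\delta_k}\|_2^2+\lambda\|w(\Psi(y^{\delta_k}))\odot|Dx|\|_1$. Then the sequence $\{x^*_{\Psi,\delta_k}\}_{k\in\mathbb{N}}$ is bounded.
   Context: Let $K\in\mathbb{R}^{m\times n}$ with $m\le n$, and let $D_h,D_v\in\mathbb{R}^{n\times n}$ be the discrete horizontal and vertical difference operators; $Dx=\begin{bmatrix}D_hx\\ D_vx\end{bmatrix}\in\mathbb{R}^{2n}$, and $|Dx|\in\mathbb{R}^n$, $(|Dx|)_i=\sqrt{(D_hx)_i^2+(D_vx)_i^2}$. $\mathcal{X}=\{x\in\mathbb{R}^n: x_i\ge 0\ \forall i\}$; $x^{GT}\in\mathcal{X}$ is fixed. Fix $\lambda>0$, $\eta>0$, $p\in(0,1)$, and for $\tilde x\in\mathbb{R}^n$ define $(w(\tilde{x}))_i=\big(\eta/\sqrt{\eta^2+(|D\tilde{x}|)_i^2}\big)^{1-p}$. A reconstructor is a Lipschitz continuous map $\Psi:\mathbb{R}^m\to\mathbb{R}^n$. $\odot$ is the entrywise product. *)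

theory Defs
  imports "HOL-Analysis.Analysis"
begin

definition nonneg_orthant :: "(real^'n) set" where
  "nonneg_orthant = {x. \<forall>i. x $ i \<ge> 0}"

definition absD :: "real^'n^'n \<Rightarrow> real^'n^'n \<Rightarrow> real^'n \<Rightarrow> real^'n" where
  "absD Dh Dv x = (\<chi> i. sqrt (((Dh *v x) $ i)\<^sup>2 + ((Dv *v x) $ i)\<^sup>2))"

definition weight :: "real^'n^'n \<Rightarrow> real^'n^'n \<Rightarrow> real \<Rightarrow> real \<Rightarrow> real^'n \<Rightarrow> real^'n" where
  "weight Dh Dv \<eta> p xt =
     (\<chi> i. (\<eta> / sqrt (\<eta>\<^sup>2 + ((absD Dh Dv xt) $ i)\<^sup>2)) powr (1 - p))"

definition norm1 :: "real^'n \<Rightarrow> real" where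
  "norm1 v = (\<Sum>i\<in>UNIV. \<bar>v $ i\<bar>)"

definition J_fun :: "real^'n^'m \<Rightarrow> real^'n^'n \<Rightarrow> real^'n^'n \<Rightarrow> real \<Rightarrow> real \<Rightarrow> real
    \<Rightarrow> (real^'m \<Rightarrow> real^'n) \<Rightarrow> real^'m \<Rightarrow> real^'n \<Rightarrow> real" where
  "J_fun K Dh Dv lam \<eta> p \<Psi> y x =
     (norm (K *v x - y))\<^sup>2
     + lam * norm1 (\<chi> i. (weight Dh Dv \<eta> p (\<Psi> y)) $ i * (absD Dh Dv x) $ i)"

definition reconstructor :: "(real^'m \<Rightarrow> real^'n) \<Rightarrow> bool" where
  "reconstructor \<Psi> \<longleftrightarrow> (\<exists>L. L-lipschitz_on UNIV \<Psi>)"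

end

theory Submission
  imports Defs
begin

text \<open>A minimiser has energy at most that of \<open>x\<^sup>G\<^sup>T\<close>, which is at most
  \<open>\<delta>\<^sub>k\<^sup>2 + \<lambda> \<parallel>|Dx\<^sup>G\<^sup>T|\<parallel>\<^sub>1\<close> because the weights are at most 1. This bounds the
  residual \<open>\<parallel>Kx - y\<parallel>\<close> and the weighted total variation. The data \<open>y\<^sup>\<delta>\<^sup>k\<close> are bounded,
  hence so are the Lipschitz reconstructions \<open>\<Psi>(y\<^sup>\<delta>\<^sup>k)\<close> and their gradients, which keeps the
  weights uniformly away from 0; so the unweighted total variation is bounded as well. Finally
  \<open>ker K \<inter> ker D = {0}\<close> makes \<open>x \<mapsto> (Kx, D\<^sub>hx, D\<^sub>vx)\<close> injective, hence bounded below
  in finite dimension, and the minimisers are bounded.\<close>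

lemma absD_nonneg: "0 \<le> absD Dh Dv x $ i"
  by (simp add: absD_def)

lemma abs_Dh_le_absD: "\<bar>(Dh *v x) $ i\<bar> \<le> absD Dh Dv x $ i"
  by (simp add: absD_def real_le_rsqrt)

lemma abs_Dv_le_absD: "\<bar>(Dv *v x) $ i\<bar> \<le> absD Dh Dv x $ i"
  by (simp add: absD_def real_le_rsqrt)

lemma absD_le_norm_add: "absD Dh Dv x $ i \<le> norm (Dh *v x) + norm (Dv *v x)"
proof -
  have "absD Dh Dv x $ i \<le> \<bar>(Dh *v x) $ i\<bar> + \<bar>(Dv *v x) $ i\<bar>"
    by (simp add: absD_def sqrt_sum_squares_le_sum_abs)
  also have "\<dots> \<le> norm (Dh *v x) + norm (Dv *v x)"
    by (intro add_mono component_le_norm_cart)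
  finally show ?thesis .
qed

lemma norm1_absD: "norm1 (absD Dh Dv x) = (\<Sum>i\<in>UNIV. absD Dh Dv x $ i)"
  by (simp add: norm1_def absD_nonneg)

lemma norm_Dh_le_norm1_absD: "norm (Dh *v x) \<le> norm1 (absD Dh Dv x)"
  unfolding norm1_absD
  by (rule order_trans[OF norm_le_l1_cart sum_mono[OF abs_Dh_le_absD]])

lemma norm_Dv_le_norm1_absD: "norm (Dv *v x) \<le> norm1 (absD Dh Dv x)"
  unfolding norm1_absD
  by (rule order_trans[OF norm_le_l1_cart sum_mono[OF abs_Dv_le_absD]])

lemma weight_nonneg: "0 \<le> weight Dh Dv \<eta> p x $ i"
  by (simp add: weight_def)

lemma weight_le_one:
  assumes "\<eta> > 0" "p \<le> 1"
  shows "weight Dh Dv \<eta> p x $ i \<le> 1"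
proof -
  have "\<eta> \<le> sqrt (\<eta>\<^sup>2 + (absD Dh Dv x $ i)\<^sup>2)"
    using assms(1) by (simp add: real_le_rsqrt)
  then have "\<eta> / sqrt (\<eta>\<^sup>2 + (absD Dh Dv x $ i)\<^sup>2) \<le> 1"
    using assms(1) by (simp add: divide_le_eq_1 add_pos_nonneg)
  then show ?thesis
    unfolding weight_def using assms by (simp add: powr_le1)
qed

lemma weight_ge_of_absD_le:
  assumes "\<eta> > 0" "p \<le> 1" "absD Dh Dv x $ i \<le> M"
  shows "(\<eta> / sqrt (\<eta>\<^sup>2 + M\<^sup>2)) powr (1 - p) \<le> weight Dh Dv \<eta> p x $ i"
proof -
  have "(absD Dh Dv x $ i)\<^sup>2 \<le> M\<^sup>2"
    using assms(3) absD_nonneg by (intro power_mono)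
  then have "\<eta> / sqrt (\<eta>\<^sup>2 + M\<^sup>2) \<le> \<eta> / sqrt (\<eta>\<^sup>2 + (absD Dh Dv x $ i)\<^sup>2)"
    using assms(1) by (intro divide_left_mono) (auto simp: add_pos_nonneg)
  then show ?thesis
    unfolding weight_def using assms(1,2) by (simp add: powr_mono2)
qed

lemma weight_uniformly_positive:
  assumes "bounded S" "\<eta> > 0" "p \<le> 1"
  obtains w0 where "w0 > 0" "\<And>x i. x \<in> S \<Longrightarrow> w0 \<le> weight Dh Dv \<eta> p x $ i"
proof -
  obtain R where R: "\<And>x. x \<in> S \<Longrightarrow> norm x \<le> R"
    using assms(1) by (auto simp: bounded_iff)
  obtain Ch where "Ch > 0" and Ch: "\<And>x. norm (Dh *v x) \<le> Ch * norm x"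
    using linear_bounded_pos[OF matrix_vector_mul_linear] by metis
  obtain Cv where "Cv > 0" and Cv: "\<And>x. norm (Dv *v x) \<le> Cv * norm x"
    using linear_bounded_pos[OF matrix_vector_mul_linear] by metis
  have "absD Dh Dv x $ i \<le> Ch * R + Cv * R" if "x \<in> S" for x i
  proof -
    have "Ch * norm x \<le> Ch * R" "Cv * norm x \<le> Cv * R"
      using R[OF that] \<open>Ch > 0\<close> \<open>Cv > 0\<close> by simp_all
    then show ?thesis
      using absD_le_norm_add[of Dh Dv x i] Ch[of x] Cv[of x] by linarith
  qed
  then show thesis
    using assms(2,3) by (intro that[of "(\<eta> / sqrt (\<eta>\<^sup>2 + (Ch * R + Cv * R)\<^sup>2)) powr (1 - p)"])
      (auto intro: weight_ge_of_absD_le)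
qed

lemma reconstructor_bounded_image:
  assumes "reconstructor \<Psi>" "bounded S"
  shows "bounded (\<Psi> ` S)"
proof -
  obtain L where "L-lipschitz_on UNIV \<Psi>"
    using assms(1) unfolding reconstructor_def by blast
  then have "uniformly_continuous_on S \<Psi>"
    using lipschitz_on_subset lipschitz_on_uniformly_continuous by blast
  then show ?thesis
    using assms(2) by (rule bounded_uniformly_continuous_image)
qed

lemma J_fun_eq_sum:
  "J_fun K Dh Dv lam \<eta> p \<Psi> y x =
     (norm (K *v x - y))\<^sup>2 + lam * (\<Sum>i\<in>UNIV. weight Dh Dv \<eta> p (\<Psi> y) $ i * absD Dh Dv x $ i)"
  by (simp add: J_fun_def norm1_def weight_nonneg absD_nonneg)

lemma J_fun_le:
  assumes "lam \<ge> 0" "\<eta> > 0" "p \<le> 1"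
  shows "J_fun K Dh Dv lam \<eta> p \<Psi> y x \<le> (norm (K *v x - y))\<^sup>2 + lam * norm1 (absD Dh Dv x)"
proof -
  have "(\<Sum>i\<in>UNIV. weight Dh Dv \<eta> p (\<Psi> y) $ i * absD Dh Dv x $ i) \<le> (\<Sum>i\<in>UNIV. absD Dh Dv x $ i)"
    using assms(2,3) by (intro sum_mono mult_left_le_one_le absD_nonneg weight_nonneg weight_le_one)
  then show ?thesis
    unfolding J_fun_eq_sum norm1_absD using assms(1) by (simp add: mult_left_mono)
qed

lemma residual_le_J_fun:
  assumes "lam \<ge> 0"
  shows "(norm (K *v x - y))\<^sup>2 \<le> J_fun K Dh Dv lam \<eta> p \<Psi> y x"
  unfolding J_fun_eq_sum using assms
  by (simp add: sum_nonneg weight_nonneg absD_nonneg)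

lemma weighted_TV_le_J_fun:
  assumes "lam \<ge> 0" "\<And>i. w0 \<le> weight Dh Dv \<eta> p (\<Psi> y) $ i"
  shows "lam * w0 * norm1 (absD Dh Dv x) \<le> J_fun K Dh Dv lam \<eta> p \<Psi> y x"
proof -
  have "w0 * norm1 (absD Dh Dv x) \<le> (\<Sum>i\<in>UNIV. weight Dh Dv \<eta> p (\<Psi> y) $ i * absD Dh Dv x $ i)"
    unfolding norm1_absD sum_distrib_left
    using assms(2) by (intro sum_mono mult_right_mono absD_nonneg)
  then have "lam * w0 * norm1 (absD Dh Dv x) \<le> lam * (\<Sum>i\<in>UNIV. weight Dh Dv \<eta> p (\<Psi> y) $ i * absD Dh Dv x $ i)"
    using assms(1) by (simp add: mult.assoc mult_left_mono)
  then show ?thesis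
    unfolding J_fun_eq_sum by (simp add: add_increasing)
qed

lemma minimizer_bounds:
  assumes "lam > 0" "\<eta> > 0" "p \<le> 1" "w0 > 0" "\<And>i. w0 \<le> weight Dh Dv \<eta> p (\<Psi> y) $ i"
    and "x0 \<in> nonneg_orthant"
    and "\<forall>x\<in>nonneg_orthant. J_fun K Dh Dv lam \<eta> p \<Psi> y xm \<le> J_fun K Dh Dv lam \<eta> p \<Psi> y x"
    and "(norm (K *v x0 - y))\<^sup>2 + lam * norm1 (absD Dh Dv x0) \<le> E"
  shows "norm (K *v xm - y) \<le> sqrt E" and "norm1 (absD Dh Dv xm) \<le> E / (lam * w0)"
proof -
  have "J_fun K Dh Dv lam \<eta> p \<Psi> y xm \<le> J_fun K Dh Dv lam \<eta> p \<Psi> y x0"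
    using assms(6,7) by blast
  also have "\<dots> \<le> (norm (K *v x0 - y))\<^sup>2 + lam * norm1 (absD Dh Dv x0)"
    using assms(1-3) by (intro J_fun_le) simp_all
  also have "\<dots> \<le> E"
    by (rule assms(8))
  finally have energy: "J_fun K Dh Dv lam \<eta> p \<Psi> y xm \<le> E" .
  have "(norm (K *v xm - y))\<^sup>2 \<le> E"
    using residual_le_J_fun[OF less_imp_le[OF assms(1)]] energy by (rule order_trans)
  then show "norm (K *v xm - y) \<le> sqrt E"
    by (simp add: real_le_rsqrt)
  have "lam * w0 * norm1 (absD Dh Dv xm) \<le> E"
    using weighted_TV_le_J_fun[where \<Psi> = \<Psi> and y = y, OF less_imp_le[OF assms(1)] assms(5)] energy
    by (rule order_trans)
  then show "norm1 (absD Dh Dv xm) \<le> E / (lam * w0)"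
    using assms(1,4) by (simp add: pos_le_divide_eq mult.commute)
qed

lemma joint_kernel_bounded_below:
  fixes K :: "real^'n^'m" and Dh Dv :: "real^'n^'n"
  assumes "\<forall>x. K *v x = 0 \<and> Dh *v x = 0 \<and> Dv *v x = 0 \<longrightarrow> x = 0"
  obtains c where "c > 0" "\<And>x. c * norm x \<le> norm (K *v x) + norm (Dh *v x) + norm (Dv *v x)"
proof -
  define f where "f x = (K *v x, Dh *v x, Dv *v x)" for x
  have "linear f"
    unfolding f_def
    by (intro bounded_linear.linear bounded_linear_Pair matrix_vector_mul_bounded_linear)
  have "inj f"
  proof (rule linear_injective_0[OF \<open>linear f\<close>, THEN iffD2], intro allI impI)
    fix x
    assume "f x = 0"
    then have "K *v x = 0 \<and> Dh *v x = 0 \<and> Dv *v x = 0"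
      by (simp add: f_def zero_prod_def)
    then show "x = 0"
      using assms by blast
  qed
  obtain c where "c > 0" and c: "\<And>x. c * norm x \<le> norm (f x)"
    using linear_inj_bounded_below_pos[OF \<open>linear f\<close> \<open>inj f\<close>] by blast
  have norm_f: "norm (f x) \<le> norm (K *v x) + norm (Dh *v x) + norm (Dv *v x)" for x
    unfolding f_def
    using norm_Pair_le[of "K *v x" "(Dh *v x, Dv *v x)"] norm_Pair_le[of "Dh *v x" "Dv *v x"]
    by linarith
  show thesis
  proof (rule that[OF \<open>c > 0\<close>])
    show "c * norm x \<le> norm (K *v x) + norm (Dh *v x) + norm (Dv *v x)" for x
      using c[of x] norm_f[of x] by linarith
  qed
qed

lemma bounded_range_of_joint_kernel:
  fixes K :: "real^'n^'m" and Dh Dv :: "real^'n^'n" and x :: "nat \<Rightarrow> real^'n"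
  assumes "\<forall>x. K *v x = 0 \<and> Dh *v x = 0 \<and> Dv *v x = 0 \<longrightarrow> x = 0"
    and "\<And>k. norm (K *v x k) \<le> a" "\<And>k. norm1 (absD Dh Dv (x k)) \<le> b"
  shows "bounded (range x)"
proof -
  obtain c where "c > 0" and c: "\<And>x. c * norm x \<le> norm (K *v x) + norm (Dh *v x) + norm (Dv *v x)"
    using joint_kernel_bounded_below[OF assms(1)] by blast
  have "c * norm (x k) \<le> a + 2 * b" for k
    using c[of "x k"] assms(2,3)[of k] norm_Dh_le_norm1_absD[of Dh "x k" Dv]
      norm_Dv_le_norm1_absD[of Dv "x k" Dh]
    by linarith
  then have "norm (x k) \<le> (a + 2 * b) / c" for k
    using \<open>c > 0\<close> by (simp add: pos_le_divide_eq mult.commute)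
  then show ?thesis
    unfolding bounded_iff by blast
qed

theorem lemma8:
  fixes K :: "real^'n^'m" and Dh Dv :: "real^'n^'n" and xGT :: "real^'n"
    and lam \<eta> p :: real and \<Psi> :: "real^'m \<Rightarrow> real^'n"
    and \<delta> :: "nat \<Rightarrow> real" and e :: "nat \<Rightarrow> real^'m" and y :: "nat \<Rightarrow> real^'m"
    and xs :: "nat \<Rightarrow> real^'n"
  assumes mn: "CARD('m) \<le> CARD('n)"
    and xGT: "xGT \<in> nonneg_orthant"
    and lam: "lam > 0" and eta: "\<eta> > 0" and p: "0 < p" "p < 1"
    and ker: "\<forall>x. K *v x = 0 \<and> Dh *v x = 0 \<and> Dv *v x = 0 \<longrightarrow> x = 0"
    and rec: "reconstructor \<Psi>"
    and delta: "\<delta> \<longlonglongrightarrow> 0"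
    and y_def: "\<And>k. y k = K *v xGT + e k"
    and noise: "\<And>k. norm (e k) \<le> \<delta> k"
    and xs_min: "\<And>k. xs k \<in> nonneg_orthant \<and>
        (\<forall>x\<in>nonneg_orthant. J_fun K Dh Dv lam \<eta> p \<Psi> (y k) (xs k) \<le> J_fun K Dh Dv lam \<eta> p \<Psi> (y k) x)"
    and xs_unique: "\<And>k. \<forall>x\<in>nonneg_orthant.
        (\<forall>z\<in>nonneg_orthant. J_fun K Dh Dv lam \<eta> p \<Psi> (y k) x \<le> J_fun K Dh Dv lam \<eta> p \<Psi> (y k) z)
        \<longrightarrow> x = xs k"
  shows "bounded (range xs)"
proof -
  obtain B where B: "\<And>k. \<delta> k \<le> B"
    using convergent_imp_bounded[OF delta] unfolding bounded_iff by (auto dest: abs_le_D1)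
  have y_le: "norm (y k) \<le> norm (K *v xGT) + B" for k
    using norm_triangle_ineq[of "K *v xGT" "e k"] noise[of k] B[of k] unfolding y_def by linarith
  then have "bounded (\<Psi> ` range y)"
    by (intro reconstructor_bounded_image[OF rec]) (auto simp: bounded_iff)
  then obtain w0 where "w0 > 0" and w0: "\<And>z i. z \<in> \<Psi> ` range y \<Longrightarrow> w0 \<le> weight Dh Dv \<eta> p z $ i"
    using weight_uniformly_positive[OF _ eta less_imp_le[OF p(2)]] by blast
  define E where "E = B\<^sup>2 + lam * norm1 (absD Dh Dv xGT)"
  have "(norm (K *v xGT - y k))\<^sup>2 + lam * norm1 (absD Dh Dv xGT) \<le> E" for k
    using noise[of k] B[of k] unfolding y_def E_def by (simp add: power_mono)
  note bounds = minimizer_bounds[OF lam eta less_imp_le[OF p(2)] \<open>w0 > 0\<close> w0[OF imageI[OF rangeI]]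
      xGT conjunct2[OF xs_min] this]
  show ?thesis
  proof (rule bounded_range_of_joint_kernel[OF ker])
    show "norm (K *v xs k) \<le> sqrt E + (norm (K *v xGT) + B)" for k
      using bounds(1)[of k] y_le[of k] norm_triangle_sub[of "K *v xs k" "y k"] by linarith
    show "norm1 (absD Dh Dv (xs k)) \<le> E / (lam * w0)" for k
      by (rule bounds(2))
  qed
qed

end
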